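(* For every $n\ge1$, $\mathcal{S}_n(0121,0132)=\mathcal{S}_n(0121,1032)=\mathcal{S}_n(0121,0132,1032)$.
   Context: An ascent sequence of length $n$ is a sequence $x_1\cdots x_n$ of non-negative integers with $x_1=0$ and $x_i\le 1+\#\{j<i-1: x_j<x_{j+1}\}$ for $1<i\le n$ (i.e. at most one more than the number of ascents among the first $i-1$ letters). A sequence $\pi$ contains a pattern $\tau$ (a sequence of non-negative integers) if some subsequence of $\pi$ is order-isomorphic to $\tau$ (same relative order, equal letters to equal letters); otherwise it avoids $\tau$. $\mathcal{S}_n(T)$ is the set of ascent sequences of length $n$ avoiding all patterns in $T$. *)

theory Defs
  imports Main
begin

definition asc_count :: "nat list \<Rightarrow> nat" where
  "asc_count xs = card {j. Suc j < length xs \<and> xs ! j < xs ! Suc j}"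

definition is_ascent_seq :: "nat list \<Rightarrow> bool" where
  "is_ascent_seq xs \<longleftrightarrow> (xs \<noteq> [] \<longrightarrow> xs ! 0 = 0) \<and>
     (\<forall>i. 0 < i \<and> i < length xs \<longrightarrow> xs ! i \<le> 1 + asc_count (take i xs))"

definition order_iso :: "nat list \<Rightarrow> nat list \<Rightarrow> bool" where
  "order_iso xs ys \<longleftrightarrow> length xs = length ys \<and>
     (\<forall>a < length xs. \<forall>b < length xs. (xs ! a < xs ! b \<longleftrightarrow> ys ! a < ys ! b)
                                     \<and> (xs ! a = xs ! b \<longleftrightarrow> ys ! a = ys ! b))"

definition contains :: "nat list \<Rightarrow> nat list \<Rightarrow> bool" where
  "contains \<pi> \<tau> \<longleftrightarrow> (\<exists>I. I \<subseteq> {..<length \<pi>} \<and> order_iso (nths \<pi> I) \<tau>)"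

definition avoids :: "nat list \<Rightarrow> nat list \<Rightarrow> bool" where
  "avoids \<pi> \<tau> \<longleftrightarrow> \<not> contains \<pi> \<tau>"

definition S :: "nat \<Rightarrow> nat list set \<Rightarrow> nat list set" where
  "S n T = {xs. length xs = n \<and> is_ascent_seq xs \<and> (\<forall>\<tau>\<in>T. avoids xs \<tau>)}"

end

theory Submission
  imports Defs "HOL-Library.Sublist"
begin

text \<open>
  In any ascent sequence an occurrence of 1032 at positions i < j < k < l yields the occurrence
  0132 at 0 < i < k < l, because the sequence starts with 0. Conversely, let an 0121-avoiding ascent
  sequence contain 0132 with top pair x_k > x_l > 0, and let q be the first position with
  x_q \<ge> x_l. Then x_q = x_l would give the 0121 occurrence 0, q, k, l, so x_q > x_l. If the prefix
  before q had a descent, it would complete a 1032 with k and l; so the prefix is weakly increasing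
  with values below x_l, hence has fewer than x_l ascents, and the ascent condition forces
  x_q \<le> x_l, a contradiction.
\<close>

lemma subseq_iff_sorted_indices:
  "subseq ys xs \<longleftrightarrow>
     (\<exists>js. sorted_wrt (<) js \<and> (\<forall>i\<in>set js. i < length xs) \<and> ys = map ((!) xs) js)"
proof
  assume "subseq ys xs"
  then show "\<exists>js. sorted_wrt (<) js \<and> (\<forall>i\<in>set js. i < length xs) \<and> ys = map ((!) xs) js"
  proof (induction rule: list_emb.induct)
    case (list_emb_Nil ys)
    then show ?case by (intro exI[of _ "[]"]) simp
  next
    case (list_emb_Cons xs ys y)
    then obtain js where "sorted_wrt (<) js" "\<forall>i\<in>set js. i < length ys" "xs = map ((!) ys) js"
      by blast
    then show ?case by (intro exI[of _ "map Suc js"]) (auto simp: sorted_wrt_map)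
  next
    case (list_emb_Cons2 x y xs ys)
    then obtain js where "sorted_wrt (<) js" "\<forall>i\<in>set js. i < length ys" "xs = map ((!) ys) js"
      by blast
    then show ?case
      using list_emb_Cons2.hyps by (intro exI[of _ "0 # map Suc js"]) (auto simp: sorted_wrt_map)
  qed
next
  assume "\<exists>js. sorted_wrt (<) js \<and> (\<forall>i\<in>set js. i < length xs) \<and> ys = map ((!) xs) js"
  then obtain js where sorted: "sorted_wrt (<) js" and bounded: "\<forall>i\<in>set js. i < length xs"
    and ys: "ys = map ((!) xs) js" by blast
  have "js = filter (\<lambda>i. i \<in> set js) [0..<length xs]"
    using sorted bounded
    by (intro sorted_distinct_set_unique) (auto simp: strict_sorted_iff sorted_wrt_filter)
  then have "subseq ys (map ((!) xs) [0..<length xs])"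
    unfolding ys by (metis subseq_filter_left subseq_map)
  then show "subseq ys xs" by (simp add: map_nth)
qed

lemma nths_restrict_length: "nths xs (I \<inter> {..<length xs}) = nths xs I"
  unfolding nths_def by (rule arg_cong[where f = "map fst"], rule filter_cong) (auto simp: set_zip)

lemma contains_iff_subseq: "contains xs \<tau> \<longleftrightarrow> (\<exists>ys. subseq ys xs \<and> order_iso ys \<tau>)"
  unfolding contains_def subseq_conv_nths
  by (metis inf.cobounded2 nths_restrict_length)

lemma contains_length4:
  "contains xs [a, b, c, d] \<longleftrightarrow>
     (\<exists>i j k l. i < j \<and> j < k \<and> k < l \<and> l < length xs \<and>
        order_iso [xs ! i, xs ! j, xs ! k, xs ! l] [a, b, c, d])"
    (is "_ \<longleftrightarrow> (\<exists>i j k l. ?occurs i j k l)")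
proof
  assume "contains xs [a, b, c, d]"
  then obtain js where js: "sorted_wrt (<) js" "\<forall>i\<in>set js. i < length xs"
    and iso: "order_iso (map ((!) xs) js) [a, b, c, d]"
    unfolding contains_iff_subseq subseq_iff_sorted_indices by blast
  have "length js = 4"
    using iso unfolding order_iso_def by simp
  then obtain i j k l where "js = [i, j, k, l]"
    by (auto simp: numeral_eq_Suc length_Suc_conv)
  then have "?occurs i j k l"
    using js iso by simp
  then show "\<exists>i j k l. ?occurs i j k l" by blast
next
  assume "\<exists>i j k l. ?occurs i j k l"
  then obtain i j k l where "?occurs i j k l" by blast
  then have "sorted_wrt (<) [i, j, k, l] \<and> (\<forall>m\<in>set [i, j, k, l]. m < length xs) \<and>
      order_iso (map ((!) xs) [i, j, k, l]) [a, b, c, d]"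
    by simp
  then show "contains xs [a, b, c, d]"
    unfolding contains_iff_subseq subseq_iff_sorted_indices by blast
qed

lemma order_isoD:
  "order_iso xs ys \<Longrightarrow> a < length xs \<Longrightarrow> b < length xs \<Longrightarrow>
     (xs ! a < xs ! b \<longleftrightarrow> ys ! a < ys ! b) \<and> (xs ! a = xs ! b \<longleftrightarrow> ys ! a = ys ! b)"
  unfolding order_iso_def by blast

lemma order_iso_0121_iff: "order_iso [p, q, r, s] [0, 1, 2, 1] \<longleftrightarrow> p < q \<and> q < r \<and> s = q"
proof
  assume iso: "order_iso [p, q, r, s] [0, 1, 2, 1]"
  show "p < q \<and> q < r \<and> s = q"
    using order_isoD[OF iso, of 0 1] order_isoD[OF iso, of 1 2] order_isoD[OF iso, of 3 1] by simp
next
  assume "p < q \<and> q < r \<and> s = q"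
  then show "order_iso [p, q, r, s] [0, 1, 2, 1]"
    unfolding order_iso_def by (simp add: less_Suc_eq numeral_eq_Suc)
qed

lemma order_iso_0132_iff: "order_iso [p, q, r, s] [0, 1, 3, 2] \<longleftrightarrow> p < q \<and> q < s \<and> s < r"
proof
  assume iso: "order_iso [p, q, r, s] [0, 1, 3, 2]"
  show "p < q \<and> q < s \<and> s < r"
    using order_isoD[OF iso, of 0 1] order_isoD[OF iso, of 1 3] order_isoD[OF iso, of 3 2] by simp
next
  assume "p < q \<and> q < s \<and> s < r"
  then show "order_iso [p, q, r, s] [0, 1, 3, 2]"
    unfolding order_iso_def by (simp add: less_Suc_eq numeral_eq_Suc)
qed

lemma order_iso_1032_iff: "order_iso [p, q, r, s] [1, 0, 3, 2] \<longleftrightarrow> q < p \<and> p < s \<and> s < r"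
proof
  assume iso: "order_iso [p, q, r, s] [1, 0, 3, 2]"
  show "q < p \<and> p < s \<and> s < r"
    using order_isoD[OF iso, of 1 0] order_isoD[OF iso, of 0 3] order_isoD[OF iso, of 3 2] by simp
next
  assume "q < p \<and> p < s \<and> s < r"
  then show "order_iso [p, q, r, s] [1, 0, 3, 2]"
    unfolding order_iso_def by (simp add: less_Suc_eq numeral_eq_Suc)
qed

lemma contains_0121_iff:
  "contains xs [0, 1, 2, 1] \<longleftrightarrow>
     (\<exists>i j k l. i < j \<and> j < k \<and> k < l \<and> l < length xs \<and>
        xs ! i < xs ! j \<and> xs ! j < xs ! k \<and> xs ! l = xs ! j)"
  unfolding contains_length4 order_iso_0121_iff ..

lemma contains_0132_iff:
  "contains xs [0, 1, 3, 2] \<longleftrightarrow>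
     (\<exists>i j k l. i < j \<and> j < k \<and> k < l \<and> l < length xs \<and>
        xs ! i < xs ! j \<and> xs ! j < xs ! l \<and> xs ! l < xs ! k)"
  unfolding contains_length4 order_iso_0132_iff ..

lemma contains_1032_iff:
  "contains xs [1, 0, 3, 2] \<longleftrightarrow>
     (\<exists>i j k l. i < j \<and> j < k \<and> k < l \<and> l < length xs \<and>
        xs ! j < xs ! i \<and> xs ! i < xs ! l \<and> xs ! l < xs ! k)"
  unfolding contains_length4 order_iso_1032_iff ..

lemma ascent_seq_nth_0: "is_ascent_seq xs \<Longrightarrow> xs \<noteq> [] \<Longrightarrow> xs ! 0 = 0"
  unfolding is_ascent_seq_def by simp

lemma asc_count_le_last:
  assumes "sorted ys" and "ys \<noteq> []"
  shows "asc_count ys \<le> last ys"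
proof -
  \<comment> \<open>The values just after the ascents are distinct and lie in \<open>{1..last ys}\<close>.\<close>
  let ?J = "{j. Suc j < length ys \<and> ys ! j < ys ! Suc j}"
  have mono: "ys ! a \<le> ys ! b" if "a \<le> b" "b < length ys" for a b
    using assms(1) that by (rule sorted_nth_mono)
  have "inj_on (\<lambda>j. ys ! Suc j) ?J"
  proof (rule inj_onI)
    fix x y assume x: "x \<in> ?J" and y: "y \<in> ?J" and eq: "ys ! Suc x = ys ! Suc y"
    show "x = y"
    proof (rule ccontr)
      assume "x \<noteq> y"
      then consider "Suc x \<le> y" | "Suc y \<le> x" by linarith
      then show False
        by cases (use x y eq mono in \<open>fastforce+\<close>)
    qed
  qed
  moreover have "(\<lambda>j. ys ! Suc j) ` ?J \<subseteq> {1..last ys}"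
    using mono assms(2) by (fastforce simp: last_conv_nth)
  ultimately have "card ?J \<le> card {1..last ys}"
    by (intro card_inj_on_le) simp_all
  then show ?thesis
    unfolding asc_count_def by simp
qed

lemma contains_0132_if_contains_1032:
  assumes "is_ascent_seq xs" and "contains xs [1, 0, 3, 2]"
  shows "contains xs [0, 1, 3, 2]"
proof -
  obtain i j k l where ijkl: "i < j" "j < k" "k < l" "l < length xs"
    and vals: "xs ! j < xs ! i" "xs ! i < xs ! l" "xs ! l < xs ! k"
    using assms(2) unfolding contains_1032_iff by blast
  have "xs ! 0 = 0"
    using ascent_seq_nth_0[OF assms(1)] ijkl(4) by (cases xs) auto
  then have "0 < i"
    using vals(1) by (cases i) auto
  then show ?thesis
    unfolding contains_0132_iff
    using ijkl vals \<open>xs ! 0 = 0\<close> by (intro exI[of _ 0] exI[of _ i] exI[of _ k] exI[of _ l]) auto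
qed

lemma contains_1032_if_contains_0132:
  assumes asc: "is_ascent_seq xs" and no_0121: "\<not> contains xs [0, 1, 2, 1]"
    and "contains xs [0, 1, 3, 2]"
  shows "contains xs [1, 0, 3, 2]"
proof (rule ccontr)
  assume no_1032: "\<not> contains xs [1, 0, 3, 2]"
  obtain i j k l where "i < j" "j < k" and kl: "k < l" "l < length xs"
    and "xs ! i < xs ! j" "xs ! j < xs ! l" and l_below_k: "xs ! l < xs ! k"
    using assms(3) unfolding contains_0132_iff by blast
  then have l_pos: "0 < xs ! l"
    by linarith
  have x0: "xs ! 0 = 0"
    using ascent_seq_nth_0[OF asc] kl(2) by (cases xs) auto
  define q where "q = (LEAST q. xs ! l \<le> xs ! q)"
  have q_le_k: "q \<le> k" and q_ge: "xs ! l \<le> xs ! q"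
    using Least_le[of "\<lambda>q. xs ! l \<le> xs ! q" k] LeastI[of "\<lambda>q. xs ! l \<le> xs ! q" k] l_below_k
    unfolding q_def by simp_all
  have before_q: "xs ! p < xs ! l" if "p < q" for p
    using not_less_Least[of p "\<lambda>q. xs ! l \<le> xs ! q"] that unfolding q_def by simp
  have "0 < q"
    using q_ge x0 l_pos by (cases q) auto
  have q_gt: "xs ! l < xs ! q"
  proof (rule ccontr)
    assume "\<not> xs ! l < xs ! q"
    with q_ge have "xs ! q = xs ! l"
      by linarith
    moreover have "q \<noteq> k"
      using calculation l_below_k by auto
    ultimately have "xs ! q = xs ! l" "q < k"
      using q_le_k by simp_all
    then have "contains xs [0, 1, 2, 1]"
      unfolding contains_0121_iff using kl l_below_k l_pos x0 \<open>0 < q\<close>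
      by (intro exI[of _ 0] exI[of _ q] exI[of _ k] exI[of _ l]) auto
    with no_0121 show False ..
  qed
  \<comment> \<open>Any descent before \<open>q\<close> would complete a 1032 with \<open>k\<close> and \<open>l\<close>.\<close>
  have "sorted (take q xs)"
    unfolding sorted_iff_nth_mono_less
  proof (intro allI impI)
    fix a b assume ab: "a < b" "b < length (take q xs)"
    show "take q xs ! a \<le> take q xs ! b"
    proof (rule ccontr)
      assume "\<not> take q xs ! a \<le> take q xs ! b"
      then have "contains xs [1, 0, 3, 2]"
        unfolding contains_1032_iff using ab kl l_below_k q_le_k before_q
        by (intro exI[of _ a] exI[of _ b] exI[of _ k] exI[of _ l]) auto
      with no_1032 show False ..
    qed
  qed
  moreover have q_len: "q < length xs"
    using q_le_k kl by simp
  ultimately have "asc_count (take q xs) \<le> last (take q xs)"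
    using \<open>0 < q\<close> by (intro asc_count_le_last) auto
  also have "\<dots> = xs ! (q - 1)"
    using q_len \<open>0 < q\<close> by (subst last_conv_nth) auto
  also have "\<dots> < xs ! l"
    using before_q \<open>0 < q\<close> by simp
  finally have "asc_count (take q xs) < xs ! l" .
  moreover have "xs ! q \<le> 1 + asc_count (take q xs)"
    using asc \<open>0 < q\<close> q_len unfolding is_ascent_seq_def by simp
  ultimately show False
    using q_gt by simp
qed

theorem mainTheorem4:
  fixes n :: nat
  assumes "n \<ge> 1"
  shows "S n {[0,1,2,1], [0,1,3,2]} = S n {[0,1,2,1], [1,0,3,2]} \<and>
         S n {[0,1,2,1], [1,0,3,2]} = S n {[0,1,2,1], [0,1,3,2], [1,0,3,2]}"
  unfolding S_def avoids_def
  using contains_0132_if_contains_1032 contains_1032_if_contains_0132 by auto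

end
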